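(* Let $\psi:\mathbb{R}^n\to\mathbb{R}^n$ be a contraction and $\varepsilon\ge0$. If $x,x'\in\mathbb{R}^n$ are such that $L=\|\psi(x)-\psi(x')\|$ satisfies $\|x-x'\|\le L+\varepsilon$, then for all $0\le t\le1$, $$\|\psi((1-t)x+tx')-((1-t)\psi(x)+t\psi(x'))\|\le\sqrt{\varepsilon(2L+\varepsilon)}.$$
   Context: A contraction is a map with Lipschitz constant $1$ with respect to the Euclidean norm. *)

theory Defs
  imports "HOL-Analysis.Analysis"
begin

end

theory Submission
  imports Defs
begin

text \<open>With \<open>z = (1 - t) x + t x'\<close>, a contraction moves \<open>\<psi> z\<close> at most \<open>t \<parallel>x - x'\<parallel>\<close> from \<open>\<psi> x\<close>
  and at most \<open>(1 - t) \<parallel>x - x'\<parallel>\<close> from \<open>\<psi> x'\<close>. The weighted parallelogram identity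
  then bounds the squared distance of \<open>\<psi> z\<close> from the chord by
  \<open>t (1 - t) (\<parallel>x - x'\<parallel>\<^sup>2 - \<parallel>\<psi> x - \<psi> x'\<parallel>\<^sup>2)\<close>, and with \<open>\<parallel>x - x'\<parallel> \<le> L + \<epsilon>\<close> this is at most
  \<open>(L + \<epsilon>)\<^sup>2 - L\<^sup>2 = \<epsilon> (2 L + \<epsilon>)\<close>.\<close>

lemma norm_convex_combination_power2:
  fixes u v :: "'a::real_inner" and t :: real
  shows "(norm ((1 - t) *\<^sub>R u + t *\<^sub>R v))\<^sup>2 + t * (1 - t) * (norm (v - u))\<^sup>2
       = (1 - t) * (norm u)\<^sup>2 + t * (norm v)\<^sup>2"
  unfolding power2_norm_eq_inner
  by (simp add: inner_add_left inner_add_right inner_diff_left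
      inner_diff_right inner_commute algebra_simps)

lemma contraction_convex_combination_defect:
  fixes \<psi> :: "'a::real_normed_vector \<Rightarrow> 'b::real_inner"
  assumes lip: "1-lipschitz_on S \<psi>" and "convex S" and "x \<in> S" and "x' \<in> S"
    and "0 \<le> t" and "t \<le> 1"
  shows "(norm (\<psi> ((1 - t) *\<^sub>R x + t *\<^sub>R x') - ((1 - t) *\<^sub>R \<psi> x + t *\<^sub>R \<psi> x')))\<^sup>2
           \<le> t * (1 - t) * ((norm (x - x'))\<^sup>2 - (norm (\<psi> x - \<psi> x'))\<^sup>2)"
proof -
  define z where "z = (1 - t) *\<^sub>R x + t *\<^sub>R x'"
  define d where "d = norm (x - x')"
  define u where "u = \<psi> z - \<psi> x"
  define v where "v = \<psi> z - \<psi> x'"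
  have "z \<in> S"
    unfolding z_def using assms(2-6) by (simp add: convexD)
  have contract: "norm (\<psi> a - \<psi> b) \<le> norm (a - b)" if "a \<in> S" "b \<in> S" for a b
    using lipschitz_onD[OF lip that] by (simp add: dist_norm)
  have "norm u \<le> norm (z - x)"
    unfolding u_def using contract \<open>z \<in> S\<close> \<open>x \<in> S\<close> .
  also have "z - x = t *\<^sub>R (x' - x)"
    unfolding z_def by (simp add: algebra_simps)
  finally have u: "norm u \<le> t * d"
    using \<open>0 \<le> t\<close> by (simp add: d_def norm_minus_commute)
  have "norm v \<le> norm (z - x')"
    unfolding v_def using contract \<open>z \<in> S\<close> \<open>x' \<in> S\<close> .
  also have "z - x' = (1 - t) *\<^sub>R (x - x')"
    unfolding z_def by (simp add: algebra_simps)
  finally have v: "norm v \<le> (1 - t) * d"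
    using \<open>t \<le> 1\<close> by (simp add: d_def)
  have "(1 - t) *\<^sub>R u + t *\<^sub>R v = \<psi> z - ((1 - t) *\<^sub>R \<psi> x + t *\<^sub>R \<psi> x')"
    unfolding u_def v_def by (simp add: algebra_simps)
  moreover have "norm (v - u) = norm (\<psi> x - \<psi> x')"
    unfolding u_def v_def by (simp add: norm_minus_commute)
  ultimately have "(norm (\<psi> z - ((1 - t) *\<^sub>R \<psi> x + t *\<^sub>R \<psi> x')))\<^sup>2
      = (1 - t) * (norm u)\<^sup>2 + t * (norm v)\<^sup>2 - t * (1 - t) * (norm (\<psi> x - \<psi> x'))\<^sup>2"
    using norm_convex_combination_power2[of t u v] by simp
  also have "\<dots> \<le> (1 - t) * (t * d)\<^sup>2 + t * ((1 - t) * d)\<^sup>2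
                   - t * (1 - t) * (norm (\<psi> x - \<psi> x'))\<^sup>2"
    using u v assms(5,6) by (intro diff_right_mono add_mono mult_left_mono power_mono) auto
  also have "\<dots> = t * (1 - t) * (d\<^sup>2 - (norm (\<psi> x - \<psi> x'))\<^sup>2)"
    by (simp add: algebra_simps power2_eq_square)
  finally show ?thesis
    unfolding z_def d_def .
qed

theorem lemma7p4:
  fixes \<psi> :: "real ^ 'n \<Rightarrow> real ^ 'n" and x x' :: "real ^ 'n"
    and \<epsilon> L t :: real
  assumes "1-lipschitz_on UNIV \<psi>"
    and "\<epsilon> \<ge> 0"
    and "L = norm (\<psi> x - \<psi> x')"
    and "norm (x - x') \<le> L + \<epsilon>"
    and "0 \<le> t" and "t \<le> 1"
  shows "norm (\<psi> ((1 - t) *\<^sub>R x + t *\<^sub>R x') - ((1 - t) *\<^sub>R \<psi> x + t *\<^sub>R \<psi> x'))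
           \<le> sqrt (\<epsilon> * (2 * L + \<epsilon>))"
proof (rule real_le_rsqrt)
  have "L \<le> norm (x - x')"
    using assms(3) lipschitz_onD[OF assms(1), of x x'] by (simp add: dist_norm)
  then have "L\<^sup>2 \<le> (norm (x - x'))\<^sup>2"
    using assms(3) by (simp add: power_mono)
  moreover have "(norm (x - x'))\<^sup>2 \<le> (L + \<epsilon>)\<^sup>2"
    using assms(4) by (simp add: power_mono)
  ultimately have gap: "0 \<le> (norm (x - x'))\<^sup>2 - L\<^sup>2"
    "(norm (x - x'))\<^sup>2 - L\<^sup>2 \<le> \<epsilon> * (2 * L + \<epsilon>)"
    by (simp_all add: power2_eq_square algebra_simps)
  have "0 \<le> t * (1 - t)" "t * (1 - t) \<le> 1"
    using assms(5,6) by (auto intro: mult_le_one)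
  then have "t * (1 - t) * ((norm (x - x'))\<^sup>2 - L\<^sup>2) \<le> \<epsilon> * (2 * L + \<epsilon>)"
    using gap by (metis mult_left_le_one_le order_trans)
  with contraction_convex_combination_defect[OF assms(1) convex_UNIV _ _ assms(5,6)] assms(3)
  show "(norm (\<psi> ((1 - t) *\<^sub>R x + t *\<^sub>R x') - ((1 - t) *\<^sub>R \<psi> x + t *\<^sub>R \<psi> x')))\<^sup>2
          \<le> \<epsilon> * (2 * L + \<epsilon>)"
    by (meson UNIV_I order_trans)
qed

end
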